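(* Let $\omega\ge0$ and let $\mathcal{T}$ be the scheme on $\mathcal{M}$ defined by $$\mathcal{T}(\mathbf{p})_{2i}=p_i,\qquad \mathcal{T}(\mathbf{p})_{2i+1}=M_{1/2}\big(M_{-2\omega}(p_i,p_{i-1}),\,M_{-2\omega}(p_{i+1},p_{i+2})\big),\quad i\in\mathbb{Z}.$$ Then $\delta(\mathcal{T}(\mathbf{p}))\le(4\omega+\tfrac12)\,\delta(\mathbf{p})$ for all manifold data $\mathbf{p}$. Consequently, for $0\le\omega<\tfrac18$ the scheme has a contractivity factor $\mu=4\omega+\tfrac12<1$ and is convergent (in particular for $\omega=\tfrac1{16}$, with $\mu=\tfrac34$).
   Context: $\mathcal{M}$ is a geodesically complete connected Riemannian manifold with distance $d$. $M_t(p_0,p_1)$ is the geodesic average: the point at parameter $t$ on a fixed minimal geodesic $\gamma$ with $\gamma(0)=p_0,\gamma(1)=p_1$, extended beyond $[0,1]$ for $t$ near $[0,1]$ (assumed defined for $t=-2\omega$), satisfying $d(p_0,M_t(p_0,p_1))=|t|d(p_0,p_1)$ and $d(M_t(p_0,p_1),p_1)=|1-t|d(p_0,p_1)$. Data $\mathbf{p}=(p_i)_{i\in\mathbb{Z}}$, $\delta(\mathbf{p})=\sup_id(p_i,p_{i+1})<\infty$. This scheme is the adaptation (via the symmetric geodesic inductive mean) of the linear 4-point scheme $f_{2i}\mapsto f_i$, $f_{2i+1}\mapsto-\omega(f_{i-1}+f_{i+2})+(\tfrac12+\omega)(f_i+f_{i+1})$. Convergence means: for every data $\mathbf{p}$ the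 curves $\mathrm{PG}_k(\mathcal{T}^k(\mathbf{p}))$ converge uniformly on $\mathbb{R}$, where $\mathrm{PG}_k(\mathbf{q})(t)=M_{2^kt-n}(q_n,q_{n+1})$ for $t\in[2^{-k}n,2^{-k}(n+1))$. *)

theory Defs
  imports "HOL-Analysis.Analysis"
begin

text \<open>Abstract model of the manifold setting: a complete metric space (a geodesically
complete Riemannian manifold is complete by Hopf--Rinow) together with a geodesic
average M t p0 p1, which for t in the interval [a,1] runs along a fixed minimal
constant-speed geodesic from p0 (t = 0) to p1 (t = 1).\<close>

definition geodesic_average :: "(real \<Rightarrow> 'a::metric_space \<Rightarrow> 'a \<Rightarrow> 'a) \<Rightarrow> real \<Rightarrow> bool" where
  "geodesic_average M a \<longleftrightarrow>
     (\<forall>p q. M 0 p q = p \<and> M 1 p q = q \<and>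
        (\<forall>s\<in>{a..1}. \<forall>t\<in>{a..1}. dist (M s p q) (M t p q) = \<bar>s - t\<bar> * dist p q))"

definition delta :: "(int \<Rightarrow> 'a::metric_space) \<Rightarrow> real" where
  "delta p = (SUP i. dist (p i) (p (i + 1)))"

definition bounded_diff :: "(int \<Rightarrow> 'a::metric_space) \<Rightarrow> bool" where
  "bounded_diff p \<longleftrightarrow> bdd_above (range (\<lambda>i. dist (p i) (p (i + 1))))"

definition scheme :: "(real \<Rightarrow> 'a \<Rightarrow> 'a \<Rightarrow> 'a) \<Rightarrow> real \<Rightarrow> (int \<Rightarrow> 'a) \<Rightarrow> int \<Rightarrow> 'a" where
  "scheme M \<omega> p j =
     (if even j then p (j div 2)
      else (let i = j div 2 in
            M (1/2) (M (-2*\<omega>) (p i) (p (i - 1))) (M (-2*\<omega>) (p (i + 1)) (p (i + 2)))))"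

definition PG :: "(real \<Rightarrow> 'a \<Rightarrow> 'a \<Rightarrow> 'a) \<Rightarrow> nat \<Rightarrow> (int \<Rightarrow> 'a) \<Rightarrow> real \<Rightarrow> 'a" where
  "PG M k q t = (let n = \<lfloor>2 ^ k * t\<rfloor> in M (2 ^ k * t - of_int n) (q n) (q (n + 1)))"

definition convergent_scheme ::
  "(real \<Rightarrow> 'a::metric_space \<Rightarrow> 'a \<Rightarrow> 'a) \<Rightarrow> ((int \<Rightarrow> 'a) \<Rightarrow> int \<Rightarrow> 'a) \<Rightarrow> bool" where
  "convergent_scheme M T \<longleftrightarrow>
     (\<forall>p. bounded_diff p \<longrightarrow>
        (\<exists>F. \<forall>\<epsilon>>0. \<exists>K. \<forall>k\<ge>K. \<forall>t. dist (PG M k ((T ^^ k) p) t) (F t) < \<epsilon>))"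

end

theory Submission
  imports Defs
begin

(* The inserted point T(p)_(2i+1) is the midpoint X of
       A = M_(-2w)(p_i, p_(i-1)) and B = M_(-2w)(p_(i+1), p_(i+2)).  Since
       d(A, p_i) and d(B, p_(i+1)) are at most 2w d(p), the triangle inequality
       gives d(A,B) <= (4w+1) d(p), hence d(p_i, X) and d(X, p_(i+1)) are at most
       2w d(p) + d(A,B)/2 <= (4w + 1/2) d(p).  Taking suprema bounds delta(T p).
   (2) Convergence.  We prove the general fact that every interpolatory scheme
       (T(q)_(2i) = q_i) with a contractivity factor mu < 1 converges: the
       differences of the k-th iterate are at most mu^k delta(p), consecutive
       geodesic polygons PG_k and PG_(k+1) are then within 3 mu^k delta(p)
       uniformly, and a sequence of functions into a complete space with
       geometrically decreasing successive uniform distances converges uniformly. *)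

lemma geodesic_averageD:
  assumes "geodesic_average M a"
  shows "M 0 p q = p" and "M 1 p q = q"
    and "s \<in> {a..1} \<Longrightarrow> t \<in> {a..1} \<Longrightarrow> dist (M s p q) (M t p q) = \<bar>s - t\<bar> * dist p q"
  using assms unfolding geodesic_average_def by auto

lemma geodesic_average_dist_start:
  assumes "geodesic_average M a" "a \<le> 0" "a \<le> t" "t \<le> 1"
  shows "dist (M t p q) p = \<bar>t\<bar> * dist p q"
  using geodesic_averageD(3)[OF assms(1), where s = t and t = 0] geodesic_averageD(1)[OF assms(1)]
    assms(2-4) by simp

lemma geodesic_average_dist_end:
  assumes "geodesic_average M a" "a \<le> t" "t \<le> 1"
  shows "dist (M t p q) q = \<bar>1 - t\<bar> * dist p q"
  using geodesic_averageD(3)[OF assms(1), where s = t and t = 1] geodesic_averageD(2)[OF assms(1)]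
    assms(2,3) by (simp add: abs_minus_commute)

lemma geodesic_average_dist_segment:
  assumes "geodesic_average M a" "a \<le> 0" "0 \<le> t" "t \<le> 1"
  shows "dist (M t p q) p \<le> dist p q"
proof -
  have "dist (M t p q) p = t * dist p q"
    using geodesic_average_dist_start[OF assms(1,2)] assms(2-4) by simp
  also have "\<dots> \<le> dist p q" using assms(3,4) by (intro mult_left_le_one_le) auto
  finally show ?thesis .
qed

lemma dist_le_delta:
  assumes "bounded_diff p"
  shows "dist (p i) (p (i + 1)) \<le> delta p"
  using assms unfolding bounded_diff_def delta_def by (intro cSUP_upper) auto

lemma delta_le:
  assumes "\<And>i. dist (p i) (p (i + 1)) \<le> c"
  shows "delta p \<le> c"
  unfolding delta_def using assms by (intro cSUP_least) auto

section \<open>Contractivity of the geodesic four-point scheme\<close>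

lemma scheme_even: "scheme M \<omega> p (2 * i) = p i"
  unfolding scheme_def by simp

lemma scheme_odd:
  "scheme M \<omega> p (2 * i + 1) =
     M (1/2) (M (-2*\<omega>) (p i) (p (i - 1))) (M (-2*\<omega>) (p (i + 1)) (p (i + 2)))"
  unfolding scheme_def by (simp add: Let_def)

lemma scheme_inserted_point_close:
  fixes M :: "real \<Rightarrow> 'a::metric_space \<Rightarrow> 'a \<Rightarrow> 'a" and i :: int
  assumes w: "\<omega> \<ge> 0" and ga: "geodesic_average M (-2 * \<omega>)"
    and c: "\<And>i. dist (p i) (p (i + 1)) \<le> c"
  defines "X \<equiv> scheme M \<omega> p (2 * i + 1)"
  shows "dist (p i) X \<le> (4*\<omega> + 1/2) * c" and "dist X (p (i + 1)) \<le> (4*\<omega> + 1/2) * c"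
proof -
  define A where "A = M (-2*\<omega>) (p i) (p (i - 1))"
  define B where "B = M (-2*\<omega>) (p (i + 1)) (p (i + 2))"
  have X: "X = M (1/2) A B" unfolding X_def A_def B_def by (rule scheme_odd)
  have extrapolate: "dist (M (-2*\<omega>) x y) x = 2*\<omega> * dist x y" for x y
    using geodesic_average_dist_start[OF ga] w by simp
  have dA: "dist A (p i) \<le> 2*\<omega>*c"
    using c[of "i - 1"] w unfolding A_def extrapolate by (simp add: dist_commute mult_left_mono)
  have dB: "dist B (p (i + 1)) \<le> 2*\<omega>*c"
    using c[of "i + 1"] w unfolding B_def extrapolate by (simp add: mult_left_mono add.assoc)
  have dAB: "dist A B \<le> (4*\<omega> + 1) * c"
  proof -
    have "dist A B \<le> dist A (p i) + dist (p i) (p (i + 1)) + dist (p (i + 1)) B"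
      by (metis add_right_mono dist_triangle order_trans)
    then show ?thesis using dA dB c[of i] by (simp add: dist_commute algebra_simps)
  qed
  have XA: "dist X A = dist A B / 2"
    unfolding X using geodesic_average_dist_start[OF ga] w by simp
  have XB: "dist X B = dist A B / 2"
    unfolding X using geodesic_average_dist_end[OF ga] w by simp
  show "dist (p i) X \<le> (4*\<omega> + 1/2) * c"
    using dist_triangle[of "p i" X A] dA dAB XA by (simp add: dist_commute algebra_simps)
  show "dist X (p (i + 1)) \<le> (4*\<omega> + 1/2) * c"
    using dist_triangle[of X "p (i + 1)" B] dB dAB XB by (simp add: dist_commute algebra_simps)
qed

text \<open>Contractivity factor 4w + 1/2: every new edge joins an old point to an inserted one.\<close>
lemma scheme_contractive:
  fixes M :: "real \<Rightarrow> 'a::metric_space \<Rightarrow> 'a \<Rightarrow> 'a"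
  assumes "\<omega> \<ge> 0" "geodesic_average M (-2 * \<omega>)"
    and "\<And>i. dist (p i) (p (i + 1)) \<le> c"
  shows "dist (scheme M \<omega> p j) (scheme M \<omega> p (j + 1)) \<le> (4*\<omega> + 1/2) * c"
proof (cases "even j")
  case True
  then obtain i where "j = 2 * i" by blast
  then show ?thesis
    using scheme_inserted_point_close(1)[where p = p, OF assms] by (simp add: scheme_even)
next
  case False
  then obtain i where j: "j = 2 * i + 1" using oddE by blast
  then have "j + 1 = 2 * (i + 1)" by simp
  then show ?thesis
    using scheme_inserted_point_close(2)[where p = p, OF assms] j by (simp only: scheme_even)
qed

section \<open>Convergence of interpolatory contractive schemes\<close>

lemma geometric_dist_tail:
  fixes f :: "nat \<Rightarrow> 'b \<Rightarrow> 'a::metric_space"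
  assumes "\<mu> < 1" and step: "\<And>k t. dist (f k t) (f (Suc k) t) \<le> B * \<mu>^k"
  shows "dist (f k t) (f (k + j) t) \<le> B * (\<mu>^k - \<mu>^(k + j)) / (1 - \<mu>)"
proof (induction j)
  case 0
  then show ?case by simp
next
  case (Suc j)
  have "dist (f k t) (f (k + Suc j) t) \<le> dist (f k t) (f (k + j) t) + dist (f (k + j) t) (f (Suc (k + j)) t)"
    by (simp add: dist_triangle)
  also have "\<dots> \<le> B * (\<mu>^k - \<mu>^(k + j)) / (1 - \<mu>) + B * \<mu>^(k + j)"
    using Suc step[of "k + j" t] by linarith
  also have "\<dots> = B * (\<mu>^k - \<mu>^(k + Suc j)) / (1 - \<mu>)"
    using assms(1) by (simp add: field_simps)
  finally show ?case .
qed

lemma geometric_uniform_convergence: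
  fixes f :: "nat \<Rightarrow> 'b \<Rightarrow> 'a::complete_space"
  assumes \<mu>: "0 \<le> \<mu>" "\<mu> < 1" and B: "0 \<le> B"
    and step: "\<And>k t. dist (f k t) (f (Suc k) t) \<le> B * \<mu>^k"
  shows "\<exists>F. \<forall>\<epsilon>>0. \<exists>K. \<forall>k\<ge>K. \<forall>t. dist (f k t) (F t) < \<epsilon>"
proof -
  define r where "r k = B * \<mu>^k / (1 - \<mu>)" for k
  have tail: "dist (f k t) (f m t) \<le> r k" if "k \<le> m" for k m t
  proof -
    obtain j where m: "m = k + j" using \<open>k \<le> m\<close> le_Suc_ex by blast
    have "dist (f k t) (f m t) \<le> B * (\<mu>^k - \<mu>^(k + j)) / (1 - \<mu>)"
      unfolding m by (rule geometric_dist_tail[OF \<mu>(2) step])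
    also have "\<dots> \<le> r k"
      unfolding r_def using \<mu> B by (intro divide_right_mono mult_left_mono) auto
    finally show ?thesis .
  qed
  have "r \<longlonglongrightarrow> 0"
    unfolding r_def using \<mu> by (intro tendsto_divide_zero tendsto_mult_right_zero LIMSEQ_power_zero) auto
  have "uniformly_Cauchy_on UNIV f"
    unfolding uniformly_Cauchy_on_def
  proof (intro allI impI)
    fix e :: real assume "e > 0"
    then have "\<forall>\<^sub>F k in sequentially. r k < e / 2"
      using \<open>r \<longlonglongrightarrow> 0\<close> by (intro order_tendstoD(2)) auto
    then obtain K where K: "r K < e / 2" unfolding eventually_sequentially by blast
    show "\<exists>N. \<forall>x\<in>UNIV. \<forall>m\<ge>N. \<forall>n\<ge>N. dist (f m x) (f n x) < e"
    proof (intro exI ballI allI impI)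
      fix x m n assume "K \<le> m" "K \<le> n"
      have "dist (f m x) (f n x) \<le> dist (f K x) (f m x) + dist (f K x) (f n x)"
        by (rule dist_triangle3)
      also have "\<dots> \<le> r K + r K" using tail \<open>K \<le> m\<close> \<open>K \<le> n\<close> by (intro add_mono)
      finally show "dist (f m x) (f n x) < e" using K by linarith
    qed
  qed
  then obtain F where "uniform_limit UNIV f F sequentially"
    using Cauchy_uniformly_convergent unfolding uniformly_convergent_on_def by blast
  then show ?thesis
    unfolding uniform_limit_iff eventually_sequentially by blast
qed

lemma iterate_contractive:
  fixes T :: "(int \<Rightarrow> 'a::metric_space) \<Rightarrow> int \<Rightarrow> 'a"
  assumes contr: "\<And>q c. (\<And>i. dist (q i) (q (i + 1)) \<le> c) \<Longrightarrow>
                     (\<And>j. dist (T q j) (T q (j + 1)) \<le> \<mu> * c)"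
    and c: "\<And>i. dist (p i) (p (i + 1)) \<le> c"
  shows "dist ((T ^^ k) p i) ((T ^^ k) p (i + 1)) \<le> \<mu>^k * c"
proof (induction k arbitrary: i)
  case 0
  then show ?case using c by simp
next
  case (Suc k)
  then show ?case using contr[of "(T ^^ k) p" "\<mu>^k * c"] by (simp add: mult.assoc)
qed

text \<open>Cell n of level k splits into cells 2n and 2n + 1 of level k + 1.\<close>
lemma floor_double_cases:
  fixes x :: real
  shows "\<lfloor>2 * x\<rfloor> = 2 * \<lfloor>x\<rfloor> \<or> \<lfloor>2 * x\<rfloor> = 2 * \<lfloor>x\<rfloor> + 1"
proof -
  have "2 * \<lfloor>x\<rfloor> \<le> \<lfloor>2 * x\<rfloor>" by (simp add: le_floor_iff)
  moreover have "\<lfloor>2 * x\<rfloor> < 2 * \<lfloor>x\<rfloor> + 2" by (simp add: floor_less_iff) linarith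
  ultimately show ?thesis by linarith
qed

lemma PG_near_left_node:
  assumes ga: "geodesic_average M a" "a \<le> 0"
    and c: "\<And>i. dist (q i) (q (i + 1)) \<le> c"
  shows "dist (PG M k q t) (q \<lfloor>2^k * t\<rfloor>) \<le> c"
proof -
  define s where "s = 2^k * t - of_int \<lfloor>2^k * t\<rfloor>"
  have "0 \<le> s" "s \<le> 1" unfolding s_def by linarith+
  then show ?thesis
    unfolding PG_def Let_def s_def[symmetric]
    using geodesic_average_dist_segment[OF ga] c order_trans by blast
qed

lemma PG_refinement_dist:
  assumes ga: "geodesic_average M a" "a \<le> 0"
    and interp: "\<And>i. T q (2 * i) = q i"
    and c: "\<And>i. dist (q i) (q (i + 1)) \<le> c"
    and c': "\<And>i. dist (T q i) (T q (i + 1)) \<le> c'"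
  shows "dist (PG M k q t) (PG M (Suc k) (T q) t) \<le> c + 2 * c'"
proof -
  define n where "n = \<lfloor>2^k * t\<rfloor>"
  define m where "m = \<lfloor>2^Suc k * t\<rfloor>"
  have "m = \<lfloor>2 * (2^k * t)\<rfloor>" unfolding m_def by (simp add: mult.assoc)
  then have "m = 2 * n \<or> m = 2 * n + 1" unfolding n_def by (simp add: floor_double_cases)
  moreover have "0 \<le> c'" using c'[of 0] zero_le_dist order_trans by blast
  ultimately have node: "dist (T q m) (q n) \<le> c'"
    using interp[of n] c'[of "2 * n"] by (auto simp: dist_commute)
  have "dist (PG M k q t) (q n) \<le> c"
    unfolding n_def by (rule PG_near_left_node[where q = q, OF ga c])
  moreover have "dist (PG M (Suc k) (T q) t) (T q m) \<le> c'"
    unfolding m_def by (rule PG_near_left_node[where q = "T q", OF ga c'])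
  ultimately show ?thesis
    using node dist_triangle[of "PG M k q t" "PG M (Suc k) (T q) t" "q n"]
      dist_triangle[of "q n" "PG M (Suc k) (T q) t" "T q m"]
    by (simp add: dist_commute)
qed

lemma interpolatory_contractive_convergent:
  fixes M :: "real \<Rightarrow> 'a::complete_space \<Rightarrow> 'a \<Rightarrow> 'a"
  assumes ga: "geodesic_average M a" "a \<le> 0"
    and interp: "\<And>q i. T q (2 * i) = q i"
    and contr: "\<And>q c. (\<And>i. dist (q i) (q (i + 1)) \<le> c) \<Longrightarrow>
                     (\<And>j. dist (T q j) (T q (j + 1)) \<le> \<mu> * c)"
    and \<mu>: "0 \<le> \<mu>" "\<mu> < 1"
  shows "convergent_scheme M T"
  unfolding convergent_scheme_def
proof (intro allI impI)
  fix p :: "int \<Rightarrow> 'a" assume "bounded_diff p"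
  define D where "D = delta p"
  have D: "\<And>i. dist (p i) (p (i + 1)) \<le> D"
    unfolding D_def using \<open>bounded_diff p\<close> by (rule dist_le_delta)
  have "0 \<le> D" using D[of 0] zero_le_dist order_trans by blast
  have iter: "\<And>k i. dist ((T ^^ k) p i) ((T ^^ k) p (i + 1)) \<le> \<mu>^k * D"
    using iterate_contractive[where T = T and p = p, OF contr D] by blast
  have "dist (PG M k ((T ^^ k) p) t) (PG M (Suc k) ((T ^^ Suc k) p) t) \<le> (3 * D) * \<mu>^k" for k t
  proof -
    have "dist (PG M k ((T ^^ k) p) t) (PG M (Suc k) ((T ^^ Suc k) p) t)
          \<le> \<mu>^k * D + 2 * (\<mu>^Suc k * D)"
      using PG_refinement_dist[where T = T and q = "(T ^^ k) p", OF ga interp iter] iter[of "Suc k"]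
      by simp
    also have "\<mu>^Suc k * D \<le> \<mu>^k * D"
      using \<mu> \<open>0 \<le> D\<close> by (simp add: mult_left_le_one_le mult.assoc)
    finally show ?thesis by (simp add: algebra_simps)
  qed
  then show "\<exists>F. \<forall>\<epsilon>>0. \<exists>K. \<forall>k\<ge>K. \<forall>t. dist (PG M k ((T ^^ k) p) t) (F t) < \<epsilon>"
    using \<mu> \<open>0 \<le> D\<close>
    by (intro geometric_uniform_convergence[where f = "\<lambda>k. PG M k ((T ^^ k) p)" and B = "3 * D"]) auto
qed

theorem mainTheorem7:
  fixes M :: "real \<Rightarrow> 'a::complete_space \<Rightarrow> 'a \<Rightarrow> 'a" and \<omega> :: real
  assumes "\<omega> \<ge> 0"
    and "geodesic_average M (-2 * \<omega>)"
  shows "(\<forall>p. bounded_diff p \<longrightarrow> delta (scheme M \<omega> p) \<le> (4 * \<omega> + 1/2) * delta p)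
         \<and> (\<omega> < 1/8 \<longrightarrow> 4 * \<omega> + 1/2 < 1 \<and> convergent_scheme M (scheme M \<omega>))"
proof (intro conjI allI impI)
  fix p :: "int \<Rightarrow> 'a" assume "bounded_diff p"
  show "delta (scheme M \<omega> p) \<le> (4 * \<omega> + 1/2) * delta p"
    using scheme_contractive[where p = p, OF assms dist_le_delta[OF \<open>bounded_diff p\<close>]]
    by (rule delta_le)
next
  assume "\<omega> < 1/8"
  then show "4 * \<omega> + 1/2 < 1" by simp
  show "convergent_scheme M (scheme M \<omega>)"
  proof (rule interpolatory_contractive_convergent)
    show "geodesic_average M (-2 * \<omega>)" "-2 * \<omega> \<le> 0" using assms by auto
    show "\<And>q i. scheme M \<omega> q (2 * i) = q i" by (rule scheme_even)
    show "\<And>q c j. (\<And>i. dist (q i) (q (i + 1)) \<le> c) \<Longrightarrow>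
            dist (scheme M \<omega> q j) (scheme M \<omega> q (j + 1)) \<le> (4 * \<omega> + 1/2) * c"
      using scheme_contractive[OF assms] by blast
    show "0 \<le> 4 * \<omega> + 1/2" "4 * \<omega> + 1/2 < 1" using assms \<open>\<omega> < 1/8\<close> by auto
  qed
qed

end
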